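(* Let $X$ be an Alexandroff space, $Y$ a topological space, and $f:X\to Y$ a map. Then $f$ has closed graph if and only if for every connected component $C$ of $X$, $f(C)$ is a singleton $\{y\}$ with $y$ a closed point of $Y$.
   Context: For a map $f:X\to Y$ its graph is $G_f=\{(x,f(x)):x\in X\}$; $f$ has closed graph if $G_f$ is closed in $X\times Y$ (product topology). A point $y\in Y$ is closed if $\{y\}$ is a closed set. A topological space $X$ is an Alexandroff space if the intersection of every nonempty family of open subsets of $X$ is open; equivalently, every point $a\in X$ has a smallest open neighbourhood, denoted $V_a$. *)

theory Defs
  imports "HOL-Analysis.Analysis"
begin

definition alexandroff_space :: "'a topology \<Rightarrow> bool" where
  "alexandroff_space X \<longleftrightarrow>
     (\<forall>\<F>. \<F> \<noteq> {} \<and> (\<forall>U\<in>\<F>. openin X U) \<longrightarrow> openin X (\<Inter>\<F>))"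

definition graph_of :: "'a topology \<Rightarrow> ('a \<Rightarrow> 'b) \<Rightarrow> ('a \<times> 'b) set" where
  "graph_of X f = {(x, f x) | x. x \<in> topspace X}"

definition closed_graph :: "'a topology \<Rightarrow> 'b topology \<Rightarrow> ('a \<Rightarrow> 'b) \<Rightarrow> bool" where
  "closed_graph X Y f \<longleftrightarrow> closedin (prod_topology X Y) (graph_of X f)"

end

theory Submission
  imports Defs
begin

text \<open>
  Every point x of an Alexandroff space has a smallest open neighbourhood V x; it is connected,
  since an open set containing x already contains all of V x. The graph of f is closed iff every
  point (x, y) off it has a box neighbourhood U \<times> W with f(U) disjoint from W. As U can always
  be shrunk to V x, this says exactly that f maps each V x onto f x and that {f x} is closed.
  Finally, f is constant on every V x iff it is constant on every connected component: the open
  sets V x make f locally constant, and conversely V x lies in the component of x.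
\<close>

definition alexandroff_nbhd :: "'a topology \<Rightarrow> 'a \<Rightarrow> 'a set" where
  "alexandroff_nbhd X x = \<Inter>{U. openin X U \<and> x \<in> U}"

lemma centre_in_alexandroff_nbhd: "x \<in> alexandroff_nbhd X x"
  unfolding alexandroff_nbhd_def by blast

lemma alexandroff_nbhd_subset: "openin X U \<Longrightarrow> x \<in> U \<Longrightarrow> alexandroff_nbhd X x \<subseteq> U"
  unfolding alexandroff_nbhd_def by blast

lemma alexandroff_nbhd_subset_topspace:
  "x \<in> topspace X \<Longrightarrow> alexandroff_nbhd X x \<subseteq> topspace X"
  by (simp add: alexandroff_nbhd_subset)

lemma openin_alexandroff_nbhd:
  assumes "alexandroff_space X" and "x \<in> topspace X"
  shows "openin X (alexandroff_nbhd X x)"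
  using assms unfolding alexandroff_space_def alexandroff_nbhd_def
  by (metis (mono_tags, lifting) empty_iff mem_Collect_eq openin_topspace)

lemma connectedin_alexandroff_nbhd:
  assumes "x \<in> topspace X"
  shows "connectedin X (alexandroff_nbhd X x)"
  unfolding connectedin
proof (intro conjI notI)
  show "alexandroff_nbhd X x \<subseteq> topspace X"
    using assms by (rule alexandroff_nbhd_subset_topspace)
next
  let ?V = "alexandroff_nbhd X x"
  assume "\<exists>E1 E2. openin X E1 \<and> openin X E2 \<and> ?V \<subseteq> E1 \<union> E2 \<and> E1 \<inter> E2 \<inter> ?V = {}
                  \<and> E1 \<inter> ?V \<noteq> {} \<and> E2 \<inter> ?V \<noteq> {}"
  then obtain E1 E2 where E: "openin X E1" "openin X E2" "?V \<subseteq> E1 \<union> E2"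
    "E1 \<inter> E2 \<inter> ?V = {}" "E1 \<inter> ?V \<noteq> {}" "E2 \<inter> ?V \<noteq> {}"
    by blast
  have "x \<in> E1 \<union> E2"
    using E(3) centre_in_alexandroff_nbhd[of x X] by (rule subsetD)
  then consider "x \<in> E1" | "x \<in> E2"
    by auto
  then show False
  proof cases
    case 1
    with E(1) have "?V \<subseteq> E1"
      by (rule alexandroff_nbhd_subset)
    then show False
      using E(4,6) by blast
  next
    case 2
    with E(2) have "?V \<subseteq> E2"
      by (rule alexandroff_nbhd_subset)
    then show False
      using E(4,5) by blast
  qed
qed

lemma continuous_map_discrete_topology_if_locally_constant:
  assumes "\<And>x. x \<in> topspace X \<Longrightarrow> \<exists>U. openin X U \<and> x \<in> U \<and> (\<forall>z\<in>U. f z = f x)"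
  shows "continuous_map X (discrete_topology (f ` topspace X)) f"
proof -
  have "openin X {x \<in> topspace X. f x \<in> S}" for S
  proof (subst openin_subopen, intro ballI)
    fix x assume x: "x \<in> {x \<in> topspace X. f x \<in> S}"
    then obtain U where U: "openin X U" "x \<in> U" "\<forall>z\<in>U. f z = f x"
      using assms by blast
    have "U \<subseteq> {x \<in> topspace X. f x \<in> S}"
      using U(3) x openin_subset[OF U(1)] by auto
    with U(1,2) show "\<exists>T. openin X T \<and> x \<in> T \<and> T \<subseteq> {x \<in> topspace X. f x \<in> S}"
      by blast
  qed
  then show ?thesis
    by (simp add: continuous_map_def)
qed

lemma locally_constant_imp_constant_on_connectedin:
  assumes "\<And>x. x \<in> topspace X \<Longrightarrow> \<exists>U. openin X U \<and> x \<in> U \<and> (\<forall>z\<in>U. f z = f x)"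
    and "connectedin X C" and "a \<in> C"
  shows "f ` C = {f a}"
proof -
  have "connectedin (discrete_topology (f ` topspace X)) (f ` C)"
    using continuous_map_discrete_topology_if_locally_constant[OF assms(1)] assms(2)
    by (rule connectedin_continuous_map_image)
  then obtain b where "f ` C \<subseteq> {b}"
    by (auto simp: connectedin_discrete_topology)
  with assms(3) show ?thesis
    by blast
qed

lemma closedin_singleton_iff_separated:
  "closedin Y {a} \<longleftrightarrow>
    a \<in> topspace Y \<and> (\<forall>y\<in>topspace Y. y \<noteq> a \<longrightarrow> (\<exists>W. openin Y W \<and> y \<in> W \<and> a \<notin> W))"
proof
  assume "closedin Y {a}"
  then have "a \<in> topspace Y" "openin Y (topspace Y - {a})"
    by (simp_all add: closedin_def)
  then show "a \<in> topspace Y \<and> (\<forall>y\<in>topspace Y. y \<noteq> a \<longrightarrow> (\<exists>W. openin Y W \<and> y \<in> W \<and> a \<notin> W))"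
    by blast
next
  assume sep: "a \<in> topspace Y \<and> (\<forall>y\<in>topspace Y. y \<noteq> a \<longrightarrow> (\<exists>W. openin Y W \<and> y \<in> W \<and> a \<notin> W))"
  have "openin Y (topspace Y - {a})"
  proof (subst openin_subopen, intro ballI)
    fix y
    assume "y \<in> topspace Y - {a}"
    then obtain W where W: "openin Y W" "y \<in> W" "a \<notin> W"
      using sep by blast
    then have "W \<subseteq> topspace Y - {a}"
      using openin_subset[OF W(1)] by blast
    with W(1,2) show "\<exists>T. openin Y T \<and> y \<in> T \<and> T \<subseteq> topspace Y - {a}"
      by blast
  qed
  with sep show "closedin Y {a}"
    by (simp add: closedin_def)
qed

lemma closed_graph_iff_separating_nbhds:
  assumes "f ` topspace X \<subseteq> topspace Y"
  shows "closed_graph X Y f \<longleftrightarrow>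
    (\<forall>x\<in>topspace X. \<forall>y\<in>topspace Y. y \<noteq> f x \<longrightarrow>
      (\<exists>U W. openin X U \<and> openin Y W \<and> x \<in> U \<and> y \<in> W \<and> (\<forall>z\<in>U. f z \<notin> W)))"
    (is "_ \<longleftrightarrow> ?separated")
proof -
  let ?G = "graph_of X f"
  have off_graph: "(x, y) \<in> topspace X \<times> topspace Y - ?G \<longleftrightarrow>
      x \<in> topspace X \<and> y \<in> topspace Y \<and> y \<noteq> f x" for x y
    unfolding graph_of_def by auto
  have box: "U \<times> W \<subseteq> topspace X \<times> topspace Y - ?G \<longleftrightarrow> (\<forall>z\<in>U. f z \<notin> W)"
    if "openin X U" "openin Y W" for U W
    using openin_subset[OF that(1)] openin_subset[OF that(2)] unfolding graph_of_def by blast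
  have "?G \<subseteq> topspace X \<times> topspace Y"
    using assms unfolding graph_of_def by auto
  then have "closed_graph X Y f \<longleftrightarrow> openin (prod_topology X Y) (topspace X \<times> topspace Y - ?G)"
    unfolding closed_graph_def closedin_def by simp
  also have "\<dots> \<longleftrightarrow> ?separated"
    unfolding openin_prod_topology_alt off_graph
    by (smt (verit) box)
  finally show ?thesis .
qed

lemma closed_graph_iff_constant_on_alexandroff_nbhds:
  assumes X: "alexandroff_space X" and f: "f ` topspace X \<subseteq> topspace Y"
  shows "closed_graph X Y f \<longleftrightarrow>
    (\<forall>x\<in>topspace X. f ` alexandroff_nbhd X x = {f x} \<and> closedin Y {f x})"
  unfolding closed_graph_iff_separating_nbhds[OF f]
proof (intro iffI ballI conjI impI)
  fix x
  assume sep: "\<forall>x\<in>topspace X. \<forall>y\<in>topspace Y. y \<noteq> f x \<longrightarrow>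
      (\<exists>U W. openin X U \<and> openin Y W \<and> x \<in> U \<and> y \<in> W \<and> (\<forall>z\<in>U. f z \<notin> W))"
    and x: "x \<in> topspace X"
  have avoid: "\<exists>W. openin Y W \<and> y \<in> W \<and> (\<forall>z\<in>alexandroff_nbhd X x. f z \<notin> W)"
    if y: "y \<in> topspace Y" "y \<noteq> f x" for y
  proof -
    obtain U W where "openin X U" "openin Y W" "x \<in> U" "y \<in> W" "\<forall>z\<in>U. f z \<notin> W"
      using sep[rule_format, OF x y] by blast
    moreover have "alexandroff_nbhd X x \<subseteq> U"
      using \<open>openin X U\<close> \<open>x \<in> U\<close> by (rule alexandroff_nbhd_subset)
    ultimately show ?thesis
      by blast
  qed
  have "f z = f x" if z: "z \<in> alexandroff_nbhd X x" for z
  proof (rule ccontr)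
    assume "f z \<noteq> f x"
    moreover have "f z \<in> topspace Y"
      using f alexandroff_nbhd_subset_topspace[OF x] z by blast
    ultimately obtain W where "f z \<in> W" "\<forall>z\<in>alexandroff_nbhd X x. f z \<notin> W"
      using avoid by blast
    with z show False
      by blast
  qed
  then show "f ` alexandroff_nbhd X x = {f x}"
    using centre_in_alexandroff_nbhd[of x X] by blast
  show "closedin Y {f x}"
    unfolding closedin_singleton_iff_separated
    using f x avoid centre_in_alexandroff_nbhd[of x X] by blast
next
  fix x y
  assume const: "\<forall>x\<in>topspace X. f ` alexandroff_nbhd X x = {f x} \<and> closedin Y {f x}"
    and x: "x \<in> topspace X" and "y \<in> topspace Y" "y \<noteq> f x"
  then obtain W where "openin Y W" "y \<in> W" "f x \<notin> W"
    using closedin_singleton_iff_separated[of Y "f x"] by blast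
  moreover have "\<forall>z\<in>alexandroff_nbhd X x. f z = f x"
    using const x by blast
  ultimately show "\<exists>U W. openin X U \<and> openin Y W \<and> x \<in> U \<and> y \<in> W \<and> (\<forall>z\<in>U. f z \<notin> W)"
    using openin_alexandroff_nbhd[OF X x] centre_in_alexandroff_nbhd[of x X] by metis
qed

lemma constant_on_alexandroff_nbhds_iff_constant_on_components:
  assumes X: "alexandroff_space X"
  shows "(\<forall>x\<in>topspace X. f ` alexandroff_nbhd X x = {f x} \<and> P (f x)) \<longleftrightarrow>
    (\<forall>C\<in>connected_components_of X. \<exists>y. f ` C = {y} \<and> P y)"
proof (intro iffI ballI)
  fix C
  assume const: "\<forall>x\<in>topspace X. f ` alexandroff_nbhd X x = {f x} \<and> P (f x)"
    and C: "C \<in> connected_components_of X"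
  then obtain x where x: "x \<in> topspace X" and C_eq: "C = connected_component_of_set X x"
    unfolding connected_components_of_def by blast
  have "f ` C = {f x}"
  proof (rule locally_constant_imp_constant_on_connectedin)
    fix z
    assume z: "z \<in> topspace X"
    then have "\<forall>w\<in>alexandroff_nbhd X z. f w = f z"
      using const by blast
    with openin_alexandroff_nbhd[OF X z] centre_in_alexandroff_nbhd[of z X]
    show "\<exists>U. openin X U \<and> z \<in> U \<and> (\<forall>w\<in>U. f w = f z)"
      by blast
  next
    show "connectedin X C"
      using C by (rule connectedin_connected_components_of)
    show "x \<in> C"
      using x by (simp add: C_eq connected_component_of_refl)
  qed
  then show "\<exists>y. f ` C = {y} \<and> P y"
    using const x by blast
next
  fix x
  assume comp: "\<forall>C\<in>connected_components_of X. \<exists>y. f ` C = {y} \<and> P y"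
    and x: "x \<in> topspace X"
  let ?C = "connected_component_of_set X x"
  obtain y where y: "f ` ?C = {y}" "P y"
    using comp connected_component_in_connected_components_of[of X x] x by blast
  have "alexandroff_nbhd X x \<subseteq> ?C"
    using connectedin_alexandroff_nbhd[OF x] centre_in_alexandroff_nbhd
    by (rule connected_component_of_maximal)
  then have "f ` alexandroff_nbhd X x \<subseteq> {y}"
    using y(1) by (metis image_mono)
  moreover have "f x \<in> f ` alexandroff_nbhd X x"
    using centre_in_alexandroff_nbhd by (rule imageI)
  ultimately show "f ` alexandroff_nbhd X x = {f x} \<and> P (f x)"
    using y(2) by blast
qed

theorem lemma3p4:
  fixes X :: "'a topology" and Y :: "'b topology" and f :: "'a \<Rightarrow> 'b"
  assumes "alexandroff_space X"
    and "f ` topspace X \<subseteq> topspace Y"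
  shows "closed_graph X Y f \<longleftrightarrow>
    (\<forall>C\<in>connected_components_of X. \<exists>y. f ` C = {y} \<and> closedin Y {y})"
  using closed_graph_iff_constant_on_alexandroff_nbhds[OF assms]
    constant_on_alexandroff_nbhds_iff_constant_on_components[OF assms(1)]
  by simp

end
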